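(* Let $G$ be a finite simple graph with $2i$ vertices, $i\ge1$, and let $e$ be a pair of distinct vertices of $G$. If $J\in\mathcal{E}\mathcal{C}(G+e)\setminus\mathcal{E}\mathcal{C}(G)$, then for $1\le k\le i$ the number of chains in $C_k(\emptyset;G+e)$ that are $e$-singular at $J$ equals $$\sum_{p+q=k-1,\ p,q\ge0}\Big(|C_p(J;G+e)|\cdot\sum_{J'\in\mathcal{E}\mathcal{C}(G|_J)}|C_q(\emptyset;G|_{J'})|\Big).$$
   Context: All graphs are finite simple graphs; $G|_I$ is the induced subgraph on $I\subseteq V(G)$. $\mathcal{E}\mathcal{C}(G)=\{I\subseteq V(G): G|_I \text{ has no connected component of odd order}\}$. For a pair $e$ of distinct vertices, $G+e$ is $G$ with $e$ added as an edge. For a graph $G$ of even order, $\mathcal{P}(G)=\mathcal{E}\mathcal{C}(G)\cup\{V(G)\}$, ordered by inclusion; for $I\in\mathcal{P}(G)$ and $k\ge0$, $C_k(I;G)$ is the set of chains $I=I_0\subsetneq\cdots\subsetneq I_k=V(G)$ with $I_j\in\mathcal{P}(G)$ for $1\le j\le k$; we set $|C_k(I;G)|=0$ unless $0\le k\le \frac{|V(G)|}{2}-\frac{|I|}{2}$. A chain $\emptyset=I_0\subsetneq\cdots\subsetneq I_k=V(G+e)$ in $C_k(\emptyset;G+e)$ is called $e$-singular at $I_\ell$ if $\ell$ is the smallest index with $I_\ell\notin\mathcal{E}\mathcal{C}(G)$. *)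

theory Defs
  imports Main
begin

type_synonym 'a graph = "'a set \<times> 'a set set"

definition verts :: "'a graph \<Rightarrow> 'a set" where "verts G = fst G"
definition edges :: "'a graph \<Rightarrow> 'a set set" where "edges G = snd G"

definition finite_simple_graph :: "'a graph \<Rightarrow> bool" where
  "finite_simple_graph G \<longleftrightarrow> finite (verts G) \<and>
     (\<forall>x\<in>edges G. \<exists>u v. x = {u, v} \<and> u \<noteq> v \<and> u \<in> verts G \<and> v \<in> verts G)"

definition add_edge :: "'a graph \<Rightarrow> 'a set \<Rightarrow> 'a graph" where
  "add_edge G e = (verts G, insert e (edges G))"

definition induced :: "'a graph \<Rightarrow> 'a set \<Rightarrow> 'a graph" where
  "induced G I = (I, {x \<in> edges G. x \<subseteq> I})"

definition adj :: "'a graph \<Rightarrow> 'a \<Rightarrow> 'a \<Rightarrow> bool" where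
  "adj G x y \<longleftrightarrow> {x, y} \<in> edges G \<and> x \<noteq> y"

definition component :: "'a graph \<Rightarrow> 'a \<Rightarrow> 'a set" where
  "component G v = {w \<in> verts G. (adj G)\<^sup>*\<^sup>* v w}"

definition EC :: "'a graph \<Rightarrow> 'a set set" where
  "EC G = {I. I \<subseteq> verts G \<and> (\<forall>v\<in>I. even (card (component (induced G I) v)))}"

definition PP :: "'a graph \<Rightarrow> 'a set set" where
  "PP G = EC G \<union> {verts G}"

definition chains :: "'a graph \<Rightarrow> 'a set \<Rightarrow> nat \<Rightarrow> 'a set list set" where
  "chains G I k = {cs. length cs = Suc k \<and> cs ! 0 = I \<and> cs ! k = verts G \<and>
      (\<forall>j<k. cs ! j \<subset> cs ! Suc j) \<and> (\<forall>j\<in>{1..k}. cs ! j \<in> PP G)}"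

text \<open>|C_k(I;G)|, with the convention that it is 0 unless 0 \<le> k \<le> |V|/2 - |I|/2,
  written as 2k \<le> |V| - |I| over the integers\<close>
definition nchains :: "'a graph \<Rightarrow> 'a set \<Rightarrow> nat \<Rightarrow> nat" where
  "nchains G I k = (if 2 * int k \<le> int (card (verts G)) - int (card I)
                    then card (chains G I k) else 0)"

definition singular_at :: "'a graph \<Rightarrow> 'a set list \<Rightarrow> 'a set \<Rightarrow> bool" where
  "singular_at G cs J \<longleftrightarrow> (\<exists>l<length cs. cs ! l = J \<and> cs ! l \<notin> EC G \<and> (\<forall>j<l. cs ! j \<in> EC G))"

end

theory Submission
  imports Defs
begin

text \<open>
  Let \<open>\<emptyset> = I\<^sub>0 \<subset> \<dots> \<subset> I\<^sub>k = V\<close> be \<open>e\<close>-singular at \<open>J = I\<^sub>l\<close>. Cutting it at \<open>J\<close> leaves a tail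
  \<open>J = I\<^sub>l \<subset> \<dots> \<subset> I\<^sub>k\<close>, an arbitrary element of \<open>C\<^sub>k\<^sub>-\<^sub>l(J; G+e)\<close>, and a head
  \<open>I\<^sub>0 \<subset> \<dots> \<subset> I\<^sub>l\<^sub>-\<^sub>1\<close> whose members all lie in \<open>EC(G)\<close> below \<open>J' = I\<^sub>l\<^sub>-\<^sub>1\<close>, i.e. an element of
  \<open>C\<^sub>l\<^sub>-\<^sub>1(\<emptyset>; G|\<^sub>J\<^sub>')\<close> with \<open>J' \<in> EC(G|\<^sub>J)\<close>. Conversely every such head followed by every such tail
  is a chain in \<open>G+e\<close>, since \<open>EC(G) \<subseteq> EC(G+e)\<close>, and it is singular at \<open>J\<close> because \<open>J \<notin> EC(G)\<close>.
  So for each \<open>p = k - l\<close> concatenation is a bijection onto the singular chains with \<open>J\<close> in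
  position \<open>l\<close>, which gives the formula. The truncation built into \<open>|C\<^sub>k|\<close> is harmless: every
  member of \<open>EC\<close> has even order, so each step of a chain adds at least two vertices.
\<close>

lemma verts_induced [simp]: "verts (induced G I) = I"
  by (simp add: verts_def induced_def)

lemma verts_add_edge [simp]: "verts (add_edge G e) = verts G"
  by (simp add: add_edge_def verts_def)

lemma induced_induced: "I \<subseteq> J \<Longrightarrow> induced (induced G J) I = induced G I"
  by (auto simp: induced_def edges_def)

lemma adj_induced_mem: "adj (induced G I) x y \<Longrightarrow> y \<in> I"
  by (auto simp: adj_def induced_def edges_def)

lemma equivp_rtranclp_adj: "equivp (adj G)\<^sup>*\<^sup>*"
  by (rule equivp_rtranclp) (auto simp: symp_def adj_def insert_commute)

lemma component_eq_if_overlap: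
  assumes "component G a \<inter> component G b \<noteq> {}"
  shows "component G a = component G b"
  using assms equivp_rtranclp_adj[of G] unfolding component_def equivp_def by auto

lemma component_subset_if_adj_closed:
  assumes "w \<in> C" and closed: "\<And>x y. x \<in> C \<Longrightarrow> adj G x y \<Longrightarrow> y \<in> C"
  shows "component G w \<subseteq> C"
proof
  fix y assume "y \<in> component G w"
  then have "(adj G)\<^sup>*\<^sup>* w y" by (simp add: component_def)
  then show "y \<in> C"
    by (induction rule: rtranclp_induct) (auto intro: \<open>w \<in> C\<close> closed)
qed

text \<open>For infinite \<open>C\<close> the claim holds because \<open>card C = 0\<close>.\<close>
lemma even_card_if_adj_closed:
  assumes even: "\<And>w. w \<in> verts G \<Longrightarrow> even (card (component G w))"
    and "C \<subseteq> verts G" and closed: "\<And>x y. x \<in> C \<Longrightarrow> adj G x y \<Longrightarrow> y \<in> C"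
  shows "even (card C)"
proof (cases "finite C")
  case True
  let ?P = "component G ` C"
  have sub: "component G w \<subseteq> C" if "w \<in> C" for w
    using component_subset_if_adj_closed[of w C G] that closed by blast
  then have "\<Union>?P = C"
    using \<open>C \<subseteq> verts G\<close> by (auto simp: component_def)
  moreover have "pairwise disjnt ?P"
    using component_eq_if_overlap by (fastforce simp: pairwise_def disjnt_def)
  moreover have "finite A" if "A \<in> ?P" for A
    using that sub True by (auto intro: finite_subset)
  ultimately have "card C = (\<Sum>A\<in>?P. card A)"
    using card_Union_disjoint by metis
  also have "even \<dots>"
    using even \<open>C \<subseteq> verts G\<close> by (auto intro!: dvd_sum)
  finally show ?thesis .
qed simp

lemma EC_card_even: "I \<in> EC G \<Longrightarrow> even (card I)"
  by (rule even_card_if_adj_closed[of "induced G I"]) (auto simp: EC_def adj_induced_mem)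

lemma empty_in_EC [simp]: "{} \<in> EC G"
  by (simp add: EC_def)

lemma finite_EC: "finite (verts G) \<Longrightarrow> finite (EC G)"
  by (rule finite_subset[of _ "Pow (verts G)"]) (auto simp: EC_def)

lemma finite_EC_mem: "finite (verts G) \<Longrightarrow> I \<in> EC G \<Longrightarrow> finite I"
  by (auto simp: EC_def intro: finite_subset)

lemma EC_add_edge: "EC G \<subseteq> EC (add_edge G e)"
proof
  fix I assume I: "I \<in> EC G"
  have "even (card (component (induced (add_edge G e) I) w))" for w
  proof (rule even_card_if_adj_closed[of "induced G I"])
    fix x y assume "x \<in> component (induced (add_edge G e) I) w" "adj (induced G I) x y"
    then show "y \<in> component (induced (add_edge G e) I) w"
      by (auto simp: component_def adj_def induced_def verts_def edges_def add_edge_def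
          intro: rtranclp.rtrancl_into_rtrancl)
  qed (use I in \<open>auto simp: EC_def component_def\<close>)
  then show "I \<in> EC (add_edge G e)"
    using I by (simp add: EC_def)
qed

lemma EC_induced:
  assumes "J \<subseteq> verts G"
  shows "EC (induced G J) = {I \<in> EC G. I \<subseteq> J}"
proof -
  have "I \<in> EC (induced G J) \<longleftrightarrow> I \<in> EC G \<and> I \<subseteq> J" for I
    by (cases "I \<subseteq> J") (use assms in \<open>auto simp: EC_def induced_induced\<close>)
  then show ?thesis by blast
qed

lemma PP_induced:
  assumes "J \<in> EC G"
  shows "PP (induced G J) = {I \<in> EC G. I \<subseteq> J}"
proof -
  have "J \<subseteq> verts G" using assms by (simp add: EC_def)
  then show ?thesis using assms by (auto simp: PP_def EC_induced)
qed

lemma mem_chains_iff: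
  "cs \<in> chains G I k \<longleftrightarrow> length cs = Suc k \<and> hd cs = I \<and> last cs = verts G \<and>
     sorted_wrt (\<subset>) cs \<and> set (tl cs) \<subseteq> PP G"
proof (cases "length cs = Suc k")
  case True
  then have "cs \<noteq> []" by auto
  then have "hd cs = cs ! 0" "last cs = cs ! k"
    using True by (simp_all add: hd_conv_nth last_conv_nth)
  moreover have "sorted_wrt (\<subset>) cs \<longleftrightarrow> (\<forall>j<k. cs ! j \<subset> cs ! Suc j)"
    using True by (simp add: sorted_wrt_iff_nth_Suc_transp)
  moreover have "set (tl cs) = (!) cs ` {1..k}"
  proof -
    have "set (tl cs) = (!) cs ` Suc ` {..<k}"
      using True by (force simp: in_set_conv_nth nth_tl)
    then show ?thesis by (simp add: image_Suc_lessThan)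
  qed
  ultimately show ?thesis
    using True by (auto simp: chains_def)
qed (auto simp: chains_def)

lemma set_tl_subset: "set (tl xs) \<subseteq> set xs"
  by (cases xs) auto

lemma strict_chain_distinct: "sorted_wrt (\<subset>) xs \<Longrightarrow> distinct xs"
  by (induction xs) auto

lemma strict_chain_hd_subset: "sorted_wrt (\<subset>) xs \<Longrightarrow> x \<in> set xs \<Longrightarrow> hd xs \<subseteq> x"
  by (cases xs) auto

lemma strict_chain_subset_last: "sorted_wrt (\<subset>) xs \<Longrightarrow> x \<in> set xs \<Longrightarrow> x \<subseteq> last xs"
  by (induction xs) (auto dest: last_in_set)

lemma strict_chain_card_bound:
  assumes "sorted_wrt (\<subset>) xs" "xs \<noteq> []" "finite (last xs)" "\<forall>x\<in>set xs. even (card x)"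
  shows "card (hd xs) + 2 * (length xs - 1) \<le> card (last xs)"
  using assms
proof (induction xs)
  case (Cons x xs)
  show ?case
  proof (cases "xs = []")
    case False
    have "x \<subset> hd xs" using Cons.prems(1) False by simp
    moreover have "finite (hd xs)"
      using Cons.prems(1,3) False strict_chain_subset_last[of xs "hd xs"]
      by (auto intro: finite_subset)
    ultimately have "card x < card (hd xs)" by (rule psubset_card_mono[rotated])
    moreover have "even (card x)" "even (card (hd xs))" using Cons.prems(4) False by auto
    ultimately have "card x + 2 \<le> card (hd xs)" by (auto elim!: evenE)
    then show ?thesis using Cons False by auto
  qed simp
qed simp

lemma chains_finite: "finite (verts G) \<Longrightarrow> finite (chains G I k)"
proof (rule finite_subset)
  show "chains G I k \<subseteq> {xs. set xs \<subseteq> Pow (verts G) \<and> length xs = Suc k}"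
    by (force simp: mem_chains_iff dest: strict_chain_subset_last)
qed (simp add: finite_lists_length_eq)

lemma chains_card_even:
  assumes "cs \<in> chains G I k" "even (card I)" "even (card (verts G))" "x \<in> set cs"
  shows "even (card x)"
proof -
  have "set cs = insert (hd cs) (set (tl cs))"
    using assms(1) by (cases cs) (auto simp: mem_chains_iff)
  then show ?thesis
    using assms by (auto simp: mem_chains_iff PP_def dest: EC_card_even)
qed

lemma nchains_eq_card:
  assumes "finite (verts G)" "even (card (verts G))" "even (card I)"
  shows "nchains G I k = card (chains G I k)"
proof (cases "chains G I k = {}")
  case False
  then obtain cs where cs: "cs \<in> chains G I k" by blast
  then have "card I + 2 * k \<le> card (verts G)"
    using strict_chain_card_bound[of cs] chains_card_even[OF cs assms(3,2)] assms(1)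
    by (fastforce simp: mem_chains_iff)
  then show ?thesis by (simp add: nchains_def)
qed (simp add: nchains_def)

definition conc :: "'a list set \<Rightarrow> 'a list set \<Rightarrow> 'a list set" where
  "conc B A = {b @ a | b a. b \<in> B \<and> a \<in> A}"

lemma finite_conc: "finite B \<Longrightarrow> finite A \<Longrightarrow> finite (conc B A)"
  by (simp add: conc_def finite_image_set2)

lemma card_conc:
  assumes "\<forall>b\<in>B. length b = n"
  shows "card (conc B A) = card B * card A"
proof -
  have "conc B A = (\<lambda>(b, a). b @ a) ` (B \<times> A)" by (auto simp: conc_def)
  moreover have "inj_on (\<lambda>(b, a). b @ a) (B \<times> A)"
    using assms by (auto intro!: inj_onI)
  ultimately show ?thesis by (simp add: card_image card_cartesian_product)
qed

text \<open>\<open>H\<close> plays the role of \<open>G + e\<close>.\<close>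
locale singular_set =
  fixes G H :: "'a graph" and J :: "'a set"
  assumes verts_eq: "verts H = verts G"
    and EC_subset: "EC G \<subseteq> EC H"
    and J_in_EC: "J \<in> EC H"
    and J_notin_EC: "J \<notin> EC G"
begin

lemma EC_induced_J: "EC (induced G J) = {I \<in> EC G. I \<subseteq> J}"
  using J_in_EC verts_eq by (intro EC_induced) (simp add: EC_def)

lemma append_singular_chain:
  assumes a: "a \<in> chains H J p" and J': "J' \<in> EC (induced G J)"
    and b: "b \<in> chains (induced G J') {} q"
  shows "b @ a \<in> chains H {} (Suc (q + p))" and "singular_at G (b @ a) J"
proof -
  have "J' \<in> EC G" "J' \<subseteq> J" using J' EC_induced_J by auto
  then have "J' \<subset> J" using J_notin_EC by auto
  have "b \<noteq> []" "a \<noteq> []" using a b by (auto simp: mem_chains_iff)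
  have b_EC: "set b \<subseteq> EC G"
  proof -
    have "set b = insert (hd b) (set (tl b))" using \<open>b \<noteq> []\<close> by (cases b) auto
    then show ?thesis using b PP_induced[OF \<open>J' \<in> EC G\<close>] by (auto simp: mem_chains_iff)
  qed
  have "x \<subset> y" if "x \<in> set b" "y \<in> set a" for x y
  proof -
    have "x \<subseteq> J'" using b that(1) strict_chain_subset_last by (fastforce simp: mem_chains_iff)
    moreover have "J \<subseteq> y" using a that(2) strict_chain_hd_subset by (fastforce simp: mem_chains_iff)
    ultimately show ?thesis using \<open>J' \<subset> J\<close> by blast
  qed
  moreover have "set a = insert J (set (tl a))" using a \<open>a \<noteq> []\<close> by (cases a) (auto simp: mem_chains_iff)
  ultimately show "b @ a \<in> chains H {} (Suc (q + p))"
    using a b b_EC EC_subset J_in_EC \<open>b \<noteq> []\<close> \<open>a \<noteq> []\<close>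
    by (auto simp: mem_chains_iff sorted_wrt_append tl_append2 PP_def dest: set_tl_subset[THEN subsetD])
  have "(b @ a) ! length b = J" using a by (cases a) (auto simp: mem_chains_iff)
  then show "singular_at G (b @ a) J"
    unfolding singular_at_def using b_EC J_notin_EC \<open>a \<noteq> []\<close>
    by (auto intro!: exI[of _ "length b"] simp: nth_append)
qed

lemma split_singular_chain:
  assumes cs: "cs \<in> chains H {} k" and sing: "singular_at G cs J"
  obtains b a p J' where "cs = b @ a" "p < k" "a \<in> chains H J p"
    "J' \<in> EC (induced G J)" "b \<in> chains (induced G J') {} (k - 1 - p)"
proof -
  from sing obtain l where l: "l < length cs" "cs ! l = J" and pre: "\<forall>j<l. cs ! j \<in> EC G"
    by (auto simp: singular_at_def)
  have len: "length cs = Suc k" and sorted: "sorted_wrt (\<subset>) cs"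
    using cs by (auto simp: mem_chains_iff)
  have "cs ! 0 = {}" using cs by (cases cs) (auto simp: mem_chains_iff)
  then have "l \<noteq> 0" using l(2) J_notin_EC empty_in_EC by metis
  define b a J' where "b = take l cs" and "a = drop l cs" and "J' = last b"
  have "cs = b @ a" by (simp add: b_def a_def)
  have b_EC: "set b \<subseteq> EC G"
    using pre by (auto simp: b_def in_set_conv_nth)
  have "b \<noteq> []" using \<open>l \<noteq> 0\<close> l(1) by (auto simp: b_def)
  then have "J' \<in> set b" by (simp add: J'_def)
  moreover have "a \<noteq> []" "hd a = J" using l by (auto simp: a_def hd_drop_conv_nth)
  then have "J \<in> set a" using hd_in_set by blast
  ultimately have "J' \<subset> J"
    using sorted unfolding \<open>cs = b @ a\<close> sorted_wrt_append by blast
  then have J': "J' \<in> EC (induced G J)"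
    using \<open>J' \<in> set b\<close> b_EC EC_induced_J by auto
  have a_chain: "a \<in> chains H J (k - l)"
    unfolding mem_chains_iff
  proof (intro conjI)
    show "length a = Suc (k - l)" using l(1) len by (simp add: a_def)
    show "last a = verts H" using cs l(1) by (simp add: a_def mem_chains_iff)
    show "sorted_wrt (\<subset>) a" using sorted by (simp add: a_def)
    show "set (tl a) \<subseteq> PP H"
      using cs set_drop_subset[of l "tl cs"] by (auto simp: a_def tl_drop mem_chains_iff)
  qed fact
  have b_chain: "b \<in> chains (induced G J') {} (l - 1)"
    unfolding mem_chains_iff
  proof (intro conjI)
    show "length b = Suc (l - 1)" using l(1) \<open>l \<noteq> 0\<close> by (simp add: b_def)
    show "hd b = {}" using cs \<open>l \<noteq> 0\<close> by (simp add: b_def mem_chains_iff)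
    show "last b = verts (induced G J')" by (simp add: J'_def)
    show "sorted_wrt (\<subset>) b" using sorted by (simp add: b_def)
    then have "set (tl b) \<subseteq> {I \<in> EC G. I \<subseteq> J'}"
      using b_EC strict_chain_subset_last[of b] set_tl_subset[of b] by (auto simp: J'_def)
    moreover have "J' \<in> EC G" using \<open>J' \<in> set b\<close> b_EC by blast
    ultimately show "set (tl b) \<subseteq> PP (induced G J')"
      by (simp add: PP_induced)
  qed
  have "k - l < k" "k - 1 - (k - l) = l - 1" using \<open>l \<noteq> 0\<close> l(1) len by auto
  then show ?thesis using that[OF \<open>cs = b @ a\<close> _ a_chain J'] b_chain by simp
qed

lemma append_singular_chain_unique:
  assumes eq: "b @ a = b' @ a'" and a: "a \<in> chains H J p" and a': "a' \<in> chains H J p'"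
    and "J' \<in> EC (induced G J)" "b \<in> chains (induced G J') {} q"
  shows "p = p'"
proof -
  have "sorted_wrt (\<subset>) (b @ a)"
    using append_singular_chain(1)[OF assms(2,4,5)] by (simp add: mem_chains_iff)
  then have "distinct (b @ a)" by (rule strict_chain_distinct)
  moreover obtain t t' where t: "a = J # t" "a' = J # t'"
    using a a' by (cases a; cases a') (auto simp: mem_chains_iff)
  ultimately have "t = t'"
    using eq append_Cons_eq_iff[of J b t b' t'] by simp
  then show ?thesis
    using a a' t by (auto simp: mem_chains_iff)
qed

definition prefix_chains :: "nat \<Rightarrow> 'a set list set" where
  "prefix_chains q = (\<Union>J'\<in>EC (induced G J). chains (induced G J') {} q)"

lemma singular_chains_eq:
  assumes "1 \<le> k"
  shows "{cs \<in> chains H {} k. singular_at G cs J} =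
    (\<Union>p\<in>{0..k-1}. conc (prefix_chains (k - 1 - p)) (chains H J p))"
proof (intro equalityI subsetI)
  fix cs assume "cs \<in> {cs \<in> chains H {} k. singular_at G cs J}"
  then obtain b a p J' where "cs = b @ a" "p < k" "a \<in> chains H J p"
    "J' \<in> EC (induced G J)" "b \<in> chains (induced G J') {} (k - 1 - p)"
    using split_singular_chain by blast
  then have "cs \<in> conc (prefix_chains (k - 1 - p)) (chains H J p)"
    unfolding conc_def prefix_chains_def by blast
  with \<open>p < k\<close> show "cs \<in> (\<Union>p\<in>{0..k-1}. conc (prefix_chains (k - 1 - p)) (chains H J p))"
    by (intro UN_I[of p]) auto
next
  fix cs assume "cs \<in> (\<Union>p\<in>{0..k-1}. conc (prefix_chains (k - 1 - p)) (chains H J p))"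
  then obtain p b a where "p \<le> k - 1" "cs = b @ a" "a \<in> chains H J p"
    and "b \<in> prefix_chains (k - 1 - p)"
    unfolding conc_def by auto
  moreover from this(4) obtain J' where
    "J' \<in> EC (induced G J)" "b \<in> chains (induced G J') {} (k - 1 - p)"
    unfolding prefix_chains_def by blast
  moreover have "Suc (k - 1 - p + p) = k" using \<open>p \<le> k - 1\<close> assms by simp
  ultimately show "cs \<in> {cs \<in> chains H {} k. singular_at G cs J}"
    using append_singular_chain[of a p J' b "k - 1 - p"] by simp
qed

lemma finite_J: "finite (verts G) \<Longrightarrow> finite J"
  using J_in_EC verts_eq finite_EC_mem[of H] by simp

lemma finite_prefix_chains: "finite (verts G) \<Longrightarrow> finite (prefix_chains q)"
  unfolding prefix_chains_def
  by (metis finite_J finite_EC finite_EC_mem chains_finite finite_UN_I verts_induced)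

lemma length_prefix_chains: "b \<in> prefix_chains q \<Longrightarrow> length b = Suc q"
  by (auto simp: prefix_chains_def mem_chains_iff)

lemma card_prefix_chains:
  assumes "finite (verts G)"
  shows "card (prefix_chains q) = (\<Sum>J'\<in>EC (induced G J). card (chains (induced G J') {} q))"
  unfolding prefix_chains_def
proof (rule card_UN_disjoint)
  show "finite (EC (induced G J))"
    using finite_J[OF assms] by (simp add: finite_EC)
  show "\<forall>J'\<in>EC (induced G J). finite (chains (induced G J') {} q)"
    using finite_J[OF assms] finite_EC_mem[of "induced G J"] by (simp add: chains_finite)
  show "\<forall>J1\<in>EC (induced G J). \<forall>J2\<in>EC (induced G J). J1 \<noteq> J2 \<longrightarrow>
      chains (induced G J1) {} q \<inter> chains (induced G J2) {} q = {}"
    by (auto simp: mem_chains_iff)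
qed

lemma card_singular_chains:
  assumes "finite (verts G)" "1 \<le> k"
  shows "card {cs \<in> chains H {} k. singular_at G cs J} =
    (\<Sum>p\<in>{0..k-1}. card (chains H J p) * card (prefix_chains (k - 1 - p)))"
proof -
  have "card {cs \<in> chains H {} k. singular_at G cs J} =
      (\<Sum>p\<in>{0..k-1}. card (conc (prefix_chains (k - 1 - p)) (chains H J p)))"
    unfolding singular_chains_eq[OF assms(2)]
  proof (rule card_UN_disjoint)
    show "\<forall>p\<in>{0..k - 1}. finite (conc (prefix_chains (k - 1 - p)) (chains H J p))"
      using assms(1) verts_eq by (simp add: finite_conc finite_prefix_chains chains_finite)
    show "\<forall>p\<in>{0..k-1}. \<forall>p'\<in>{0..k-1}. p \<noteq> p' \<longrightarrow>
        conc (prefix_chains (k - 1 - p)) (chains H J p) \<inter>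
        conc (prefix_chains (k - 1 - p')) (chains H J p') = {}"
    proof (intro ballI impI equals0I)
      fix p p' cs assume "p \<noteq> p'" and cs: "cs \<in> conc (prefix_chains (k - 1 - p)) (chains H J p) \<inter>
        conc (prefix_chains (k - 1 - p')) (chains H J p')"
      then obtain b a J' b' a' where "cs = b @ a" "a \<in> chains H J p" "J' \<in> EC (induced G J)"
        "b \<in> chains (induced G J') {} (k - 1 - p)" "cs = b' @ a'" "a' \<in> chains H J p'"
        unfolding conc_def prefix_chains_def by blast
      then have "p = p'" using append_singular_chain_unique by metis
      with \<open>p \<noteq> p'\<close> show False ..
    qed
  qed simp
  also have "\<dots> = (\<Sum>p\<in>{0..k-1}. card (chains H J p) * card (prefix_chains (k - 1 - p)))"
    using card_conc[OF ballI[OF length_prefix_chains]] by (simp add: mult.commute)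
  finally show ?thesis .
qed

end

theorem mainTheorem6:
  fixes G :: "'a graph" and e J :: "'a set" and i k :: nat
  assumes "finite_simple_graph G"
    and "card (verts G) = 2 * i" and "i \<ge> 1"
    and "e = {u, v}" and "u \<noteq> v" and "u \<in> verts G" and "v \<in> verts G"
    and "J \<in> EC (add_edge G e) - EC G"
    and "1 \<le> k" and "k \<le> i"
  shows "card {cs \<in> chains (add_edge G e) {} k. singular_at G cs J} =
    (\<Sum>p\<in>{0..k-1}. nchains (add_edge G e) J p *
        (\<Sum>J'\<in>EC (induced G J). nchains (induced G J') {} (k - 1 - p)))"
proof -
  interpret singular_set G "add_edge G e" J
    using assms(8) EC_add_edge[of G e] by unfold_locales auto
  have fin: "finite (verts G)"
    using assms(1) by (simp add: finite_simple_graph_def)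
  have "nchains (add_edge G e) J p = card (chains (add_edge G e) J p)" for p
    using fin assms(2) EC_card_even[OF J_in_EC] by (simp add: nchains_eq_card)
  moreover have "nchains (induced G J') {} q = card (chains (induced G J') {} q)"
    if "J' \<in> EC (induced G J)" for J' q
  proof -
    have "finite J'" using that finite_J[OF fin] finite_EC_mem[of "induced G J"] by simp
    then show ?thesis using EC_card_even[OF that] by (simp add: nchains_eq_card)
  qed
  ultimately show ?thesis
    using card_singular_chains[OF fin assms(9)] card_prefix_chains[OF fin] by simp
qed

end
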